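(* Fix integers $m\ge d\ge1$, $\lambda=d/m$, let $p$ be a monic polynomial of degree $d$ with nonnegative real roots, and let $\sigma^2>0$. The following are equivalent: (1) $T^{(m,d)}_{\mathbb{S}p}$ is constant equal to $\sigma^2$, i.e. $t_1=\dots=t_d=\sigma^2$; (2) $\mathcal R^{d,\lambda}_{\mathbb{S}p}(s)=m\sigma^2s$; (3) $p$ has the same roots as $L_d^{(m-d)}(x/\sigma^2)$.
   Context: Write $p=\sum_{i=0}^d(-1)^ip_ix^{d-i}$. The rectangular $T$-transform $T^{(m,d)}_{\mathbb{S}p}$ is the multiset of complex numbers $t_1,\dots,t_d$ (viewed as a uniformly distributed random variable) determined by $\frac1d\sum_jt_j^i=\frac{i!(m-i)!(d-i)!}{m!d!}p_i$ for $i=1,\dots,d$; equivalently $\frac1d\sum_je^{-t_j\partial_x\partial_y}\{y^mx^d\}=y^{m-d}p(xy)$. Finite $R$-transform: with $E_p(s)=\sum_{i=0}^d(-1)^i(md)^i\frac{(m-i)!(d-i)!}{m!d!}p_is^i$, $\mathcal R^{d,\lambda}_{\mathbb{S}p}(s)$ is the polynomial of degree $\le d$ agreeing with $-\frac sd\frac d{ds}\log E_p(s)$ mod $s^{d+1}$. $L_d^{(\alpha)}(x)=\sum_{i=0}^d\binom{d+\alpha}{d-i}\frac{(-x)^i}{i!}$. *)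

theory Defs
  imports "HOL-Computational_Algebra.Computational_Algebra" "HOL-Library.Multiset"
begin

definition pcoef :: "nat \<Rightarrow> real poly \<Rightarrow> nat \<Rightarrow> real" where
  "pcoef d p i = (-1) ^ i * coeff p (d - i)"

definition T_transform :: "nat \<Rightarrow> nat \<Rightarrow> real poly \<Rightarrow> complex multiset" where
  "T_transform m d p = (THE T. size T = d \<and>
     (\<forall>i\<in>{1..d}. (1 / of_nat d) * sum_mset (image_mset (\<lambda>t. t ^ i) T) =
        complex_of_real (fact i * fact (m - i) * fact (d - i) / (fact m * fact d) * pcoef d p i)))"

definition E_fps :: "nat \<Rightarrow> nat \<Rightarrow> real poly \<Rightarrow> real fps" where
  "E_fps m d p = Abs_fps (\<lambda>i. if i \<le> d then
      (-1) ^ i * (real m * real d) ^ i * (fact (m - i) * fact (d - i) / (fact m * fact d)) * pcoef d p i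
    else 0)"

definition R_transform :: "nat \<Rightarrow> nat \<Rightarrow> real poly \<Rightarrow> real poly" where
  "R_transform m d p =
     (let F = - (fps_const (1 / real d) * fps_X * fps_deriv (E_fps m d p) * inverse (E_fps m d p))
      in Poly (map (fps_nth F) [0..<Suc d]))"

definition laguerre :: "nat \<Rightarrow> nat \<Rightarrow> real poly" where
  "laguerre d \<alpha> = (\<Sum>i\<le>d. smult (real ((d + \<alpha>) choose (d - i)) * (-1) ^ i / fact i) (monom 1 i))"

end

theory Submission
  imports Defs
begin

text \<open>
  All three conditions are equivalent to the moment condition T_moment m d p i = \<sigma>2 ^ i
  for 1 \<le> i \<le> d, where T_moment m d p i is the value (1/d) \<Sum>_j t_j ^ i prescribed by the
  definition of the T-transform.
  (1) By Newton's identities a multiset of d complex numbers is determined by its first d power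
  sums, and every choice of them is realised by the roots of a monic polynomial.
  (2) E_p(s) = \<Sum>_(i \<le> d) (-m d s) ^ i / i! * T_moment m d p i, so -(s/d) (log E_p)' \<equiv> m \<sigma>2 s
  modulo s ^ (d + 1) says exactly that E_p agrees with exp (-m d \<sigma>2 s) up to order d.
  (3) Made monic, the rescaled Laguerre polynomial has moments \<sigma>2 ^ i, and two monic
  polynomials of degree d have the same roots iff they are equal iff they have the same moments.
\<close>

section \<open>Newton's identities\<close>

text \<open>Here \<open>e\<close> stands for the coefficients of \<open>\<Prod>(1 - a X)\<close> and \<open>s\<close> for the power sums of the \<open>a\<close>'s.\<close>

definition newton_identity :: "(nat \<Rightarrow> 'a::comm_ring_1) \<Rightarrow> (nat \<Rightarrow> 'a) \<Rightarrow> nat \<Rightarrow> bool" where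
  "newton_identity s e n \<longleftrightarrow> of_nat n * e n = - (\<Sum>i<n. e i * s (n - i))"

lemma newton_identity_of_fps:
  fixes E S :: "'a::comm_ring_1 fps"
  assumes "fps_X * fps_deriv E = - E * S" and "S $ 0 = 0"
  shows "newton_identity (($) S) (($) E) n"
proof -
  have "of_nat n * E $ n = (fps_X * fps_deriv E) $ n"
    by (cases n) simp_all
  also have "\<dots> = - (\<Sum>i\<le>n. E $ i * S $ (n - i))"
    by (simp add: assms(1) fps_mult_nth atLeast0AtMost)
  also have "\<dots> = - (\<Sum>i<n. E $ i * S $ (n - i))"
    by (simp add: lessThan_Suc_atMost[symmetric] assms(2))
  finally show ?thesis
    unfolding newton_identity_def .
qed

lemma newton_identity_cong:
  assumes "\<And>k. 1 \<le> k \<Longrightarrow> k \<le> n \<Longrightarrow> s k = t k" and "\<And>i. i \<le> n \<Longrightarrow> e i = f i"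
  shows "newton_identity s e n \<longleftrightarrow> newton_identity t f n"
proof -
  have "(\<Sum>i<n. e i * s (n - i)) = (\<Sum>i<n. f i * t (n - i))"
    by (rule sum.cong) (auto simp: assms)
  then show ?thesis
    unfolding newton_identity_def using assms(2)[of n] by simp
qed

lemma newton_identity_unique_coeffs:
  fixes s e f :: "nat \<Rightarrow> 'a::field_char_0"
  assumes "e 0 = f 0"
    and "\<And>n. 1 \<le> n \<Longrightarrow> n \<le> d \<Longrightarrow> newton_identity s e n \<and> newton_identity s f n"
  shows "n \<le> d \<Longrightarrow> e n = f n"
proof (induction n rule: less_induct)
  case (less n)
  show ?case
  proof (cases "n = 0")
    case False
    have "(\<Sum>i<n. e i * s (n - i)) = (\<Sum>i<n. f i * s (n - i))"
      by (rule sum.cong) (use less in auto)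
    with assms(2)[of n] False less.prems have "of_nat n * e n = of_nat n * f n"
      unfolding newton_identity_def by simp
    with False show ?thesis by simp
  qed (use assms(1) in simp)
qed

lemma newton_identity_unique_power_sums:
  fixes s t e :: "nat \<Rightarrow> 'a::comm_ring_1"
  assumes "e 0 = 1"
    and "\<And>n. 1 \<le> n \<Longrightarrow> n \<le> d \<Longrightarrow> newton_identity s e n \<and> newton_identity t e n"
  shows "1 \<le> n \<Longrightarrow> n \<le> d \<Longrightarrow> s n = t n"
proof (induction n rule: less_induct)
  case (less n)
  have split: "{..<n} = insert 0 {1..<n}"
    using less.prems by auto
  have "(\<Sum>i\<in>{1..<n}. e i * s (n - i)) = (\<Sum>i\<in>{1..<n}. e i * t (n - i))"
    by (rule sum.cong) (use less in auto)
  with assms(1) assms(2)[OF less.prems] show ?case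
    unfolding newton_identity_def split by (simp add: eq_diff_eq) (metis neg_equal_iff_equal)
qed

lemma newton_identity_solvable:
  fixes s :: "nat \<Rightarrow> 'a::field_char_0"
  obtains e where "e 0 = 1" and "\<And>n. newton_identity s e n"
proof
  define S where "S = Abs_fps (\<lambda>k. if k = 0 then 0 else s k)"
  define G where "G = - Abs_fps (\<lambda>k. s k / of_nat k)"
  define E where "E = fps_exp 1 oo G"
  have "fps_X * fps_deriv G = - S"
    by (rule fps_ext) (simp add: G_def S_def del: of_nat_Suc)
  then have "fps_X * fps_deriv E = - E * S"
    by (simp add: E_def G_def fps_compose_deriv algebra_simps)
  then have "newton_identity (($) S) (($) E) n" for n
    by (rule newton_identity_of_fps) (simp add: S_def)
  then show "newton_identity s (($) E) n" for n
    by (subst newton_identity_cong[of n _ "($) S" _ "($) E"]) (auto simp: S_def)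
  show "E $ 0 = 1"
    by (simp add: E_def)
qed

definition root_poly :: "'a::comm_ring_1 multiset \<Rightarrow> 'a poly" where
  "root_poly A = (\<Prod>a\<in>#A. [:-a, 1:])"

lemma root_poly_add_mset [simp]: "root_poly (add_mset a A) = [:-a, 1:] * root_poly A"
  by (simp add: root_poly_def)

lemma root_poly_empty [simp]: "root_poly {#} = 1"
  by (simp add: root_poly_def)

lemma degree_root_poly [simp]: "degree (root_poly (A :: 'a::idom multiset)) = size A"
  and lead_coeff_root_poly: "lead_coeff (root_poly A) = 1"
proof (induction A)
  case (add a A)
  then have "root_poly A \<noteq> 0"
    by auto
  with add.IH show "degree (root_poly (add_mset a A)) = size (add_mset a A)"
    by (simp add: degree_mult_eq del: mult_pCons_left)
  from add.IH show "lead_coeff (root_poly (add_mset a A)) = 1"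
    by (simp only: root_poly_add_mset lead_coeff_mult) simp
qed simp_all

lemma proots_root_poly [simp]: "proots (root_poly (A :: 'a::idom multiset)) = A"
proof (induction A)
  case (add a A)
  have "root_poly A \<noteq> 0"
    using lead_coeff_root_poly[of A] by auto
  with add.IH show ?case
    by (simp add: proots_mult del: mult_pCons_left)
qed simp

lemma root_poly_proots_complex:
  assumes "lead_coeff p = 1"
  shows "root_poly (proots p) = (p :: complex poly)"
  using complex_poly_decompose_multiset[of p] assms by (simp add: root_poly_def)

lemma order_eq_iff_smult_complex:
  fixes P Q :: "complex poly"
  assumes "lead_coeff P = 1" and "Q \<noteq> 0"
  shows "(\<forall>z. order z P = order z Q) \<longleftrightarrow> P = smult (inverse (lead_coeff Q)) Q"
proof
  assume "\<forall>z. order z P = order z Q"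
  moreover have "P \<noteq> 0"
    using assms(1) by auto
  ultimately have "proots P = proots Q"
    using assms(2)
    by (intro multiset_eqI) auto
  have "Q = smult (lead_coeff Q) (root_poly (proots Q))"
    using complex_poly_decompose_multiset[of Q] by (simp add: root_poly_def)
  also have "root_poly (proots Q) = P"
    using \<open>proots P = proots Q\<close> root_poly_proots_complex[OF assms(1)] by simp
  finally have "Q = smult (lead_coeff Q) P" .
  moreover have "lead_coeff Q \<noteq> 0"
    using assms(2) by simp
  ultimately show "P = smult (inverse (lead_coeff Q)) Q"
    by (metis smult_smult left_inverse smult_1_left)
next
  assume "P = smult (inverse (lead_coeff Q)) Q"
  with assms(2) show "\<forall>z. order z P = order z Q"
    by (simp add: order_smult)
qed

lemma map_poly_of_real_eq_iff:
  "map_poly of_real p = (map_poly of_real q :: 'a::real_algebra_1 poly) \<longleftrightarrow> p = q"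
  by (simp add: poly_eq_iff coeff_map_poly)

lemma coeff_reflect_root_poly:
  "j \<le> size A \<Longrightarrow> coeff (reflect_poly (root_poly A)) (size A - j) = coeff (root_poly (A :: 'a::idom multiset)) j"
  by (simp add: coeff_reflect_poly)

lemma fps_of_poly_reflect_root_poly:
  "fps_of_poly (reflect_poly (root_poly A)) = (\<Prod>a\<in>#A. 1 - fps_const a * fps_X :: 'a::idom fps)"
proof -
  have "reflect_poly [:-a, 1:] = [:1, -a:]" for a :: 'a
    by (simp add: reflect_poly_def)
  then show ?thesis
    by (induction A) (simp_all add: reflect_poly_mult fps_of_poly_mult fps_of_poly_pCons del: mult_pCons_left)
qed

definition power_sums_fps :: "'a::comm_ring_1 multiset \<Rightarrow> 'a fps" where
  "power_sums_fps A = Abs_fps (\<lambda>k. if k = 0 then 0 else \<Sum>a\<in>#A. a ^ k)"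

lemma newton_identities_fps:
  "fps_X * fps_deriv (\<Prod>a\<in>#A. 1 - fps_const a * fps_X)
     = - (\<Prod>a\<in>#A. 1 - fps_const a * fps_X) * power_sums_fps (A :: 'a::comm_ring_1 multiset)"
proof -
  define E :: "'a multiset \<Rightarrow> 'a fps" where "E A = (\<Prod>a\<in>#A. 1 - fps_const a * fps_X)" for A
  have "fps_X * fps_deriv (E A) = - E A * power_sums_fps A"
  proof (induction A)
    case empty
    have "power_sums_fps {#} = (0 :: 'a fps)"
      by (rule fps_ext) (simp add: power_sums_fps_def)
    then show ?case
      by (simp add: E_def)
  next
    case (add a A)
    have geometric: "(1 - fps_const a * fps_X) * power_sums_fps {#a#} = fps_const a * fps_X"
      by (rule fps_ext) (simp add: power_sums_fps_def algebra_simps power_eq_if)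
    have "fps_X * fps_deriv (E (add_mset a A))
        = - (fps_const a * fps_X * E A) + (1 - fps_const a * fps_X) * (fps_X * fps_deriv (E A))"
      by (simp add: E_def algebra_simps del: fps_const_neg)
    also have "\<dots> = - ((1 - fps_const a * fps_X) * power_sums_fps {#a#}) * E A
        - (1 - fps_const a * fps_X) * (E A * power_sums_fps A)"
      unfolding geometric add.IH by simp
    also have "\<dots> = - ((1 - fps_const a * fps_X) * E A) * (power_sums_fps {#a#} + power_sums_fps A)"
      by (simp add: algebra_simps)
    also have "(1 - fps_const a * fps_X) * E A = E (add_mset a A)"
      by (simp add: E_def)
    also have "power_sums_fps {#a#} + power_sums_fps A = power_sums_fps (add_mset a A)"
      by (rule fps_ext) (simp add: power_sums_fps_def)
    finally show ?case .
  qed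
  then show ?thesis
    by (simp add: E_def)
qed

lemma newton_identity_root_poly:
  "newton_identity (\<lambda>k. \<Sum>a\<in>#A. a ^ k) (coeff (reflect_poly (root_poly (A :: 'a::idom multiset)))) n"
proof -
  have "newton_identity (($) (power_sums_fps A)) (($) (fps_of_poly (reflect_poly (root_poly A)))) n"
    by (rule newton_identity_of_fps)
      (simp_all add: fps_of_poly_reflect_root_poly newton_identities_fps power_sums_fps_def)
  then show ?thesis
    by (subst (asm) newton_identity_cong[of n _ "\<lambda>k. \<Sum>a\<in>#A. a ^ k" _ "coeff (reflect_poly (root_poly A))"])
      (simp_all add: power_sums_fps_def)
qed

lemma multiset_eq_if_power_sums_eq:
  fixes A B :: "'a::field_char_0 multiset"
  assumes "size A = d" and "size B = d"
    and power_sums: "\<forall>i\<in>{1..d}. (\<Sum>a\<in>#A. a ^ i) = (\<Sum>b\<in>#B. b ^ i)"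
  shows "A = B"
proof -
  have reflect_eq: "coeff (reflect_poly (root_poly A)) k = coeff (reflect_poly (root_poly B)) k"
    if "k \<le> d" for k
  proof (rule newton_identity_unique_coeffs[OF _ _ that])
    show "coeff (reflect_poly (root_poly A)) 0 = coeff (reflect_poly (root_poly B)) 0"
      using lead_coeff_root_poly[of A] lead_coeff_root_poly[of B] by simp
    fix n assume "1 \<le> n" "n \<le> d"
    with power_sums show "newton_identity (\<lambda>k. \<Sum>a\<in>#A. a ^ k) (coeff (reflect_poly (root_poly A))) n
        \<and> newton_identity (\<lambda>k. \<Sum>a\<in>#A. a ^ k) (coeff (reflect_poly (root_poly B))) n"
      using newton_identity_root_poly[of A n] newton_identity_root_poly[of B n]
      by (subst (2) newton_identity_cong[of n _ "\<lambda>k. \<Sum>b\<in>#B. b ^ k"]) auto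
  qed
  have "coeff (root_poly A) j = coeff (root_poly B) j" for j
  proof (cases "j \<le> d")
    case True
    then show ?thesis
      using reflect_eq[of "d - j"] coeff_reflect_root_poly[of j A] coeff_reflect_root_poly[of j B] assms
      by simp
  qed (simp add: assms coeff_eq_0)
  then have "root_poly A = root_poly B"
    by (rule poly_eqI)
  then show "A = B"
    by (metis proots_root_poly)
qed

lemma ex_multiset_power_sums:
  fixes s :: "nat \<Rightarrow> complex"
  obtains A where "size A = d" and "\<forall>i\<in>{1..d}. (\<Sum>a\<in>#A. a ^ i) = s i"
proof -
  obtain e where e0: "e 0 = 1" and e: "\<And>n. newton_identity s e n"
    using newton_identity_solvable[of s] by blast
  define g where "g = Poly (map (\<lambda>j. e (d - j)) [0..<Suc d])"
  have coeff_g: "coeff g j = (if j \<le> d then e (d - j) else 0)" for j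
    by (auto simp: g_def nth_default_def nth_map nth_upt simp del: upt_Suc)
  have "degree g = d"
    by (rule antisym) (auto intro: degree_le le_degree simp: coeff_g e0)
  define A where "A = proots g"
  have root_poly_A: "root_poly A = g"
    unfolding A_def by (rule root_poly_proots_complex) (simp add: \<open>degree g = d\<close> coeff_g e0)
  then have size_A: "size A = d"
    using degree_root_poly[of A] \<open>degree g = d\<close> by simp
  have "coeff (reflect_poly (root_poly A)) k = e k" if "k \<le> d" for k
    using that by (simp add: root_poly_A coeff_reflect_poly \<open>degree g = d\<close> coeff_g)
  then have "newton_identity (\<lambda>k. \<Sum>a\<in>#A. a ^ k) e n" if "n \<le> d" for n
    using newton_identity_root_poly[of A n] that
    by (subst (asm) newton_identity_cong[of n _ _ _ e]) auto
  then have "(\<Sum>a\<in>#A. a ^ i) = s i" if "1 \<le> i" "i \<le> d" for i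
    using e e0 that by (intro newton_identity_unique_power_sums[of e d "\<lambda>k. \<Sum>a\<in>#A. a ^ k" s i]) auto
  with size_A that show thesis
    by auto
qed

section \<open>The T-transform\<close>

definition T_moment :: "nat \<Rightarrow> nat \<Rightarrow> real poly \<Rightarrow> nat \<Rightarrow> real" where
  "T_moment m d p i = fact i * fact (m - i) * fact (d - i) / (fact m * fact d) * pcoef d p i"

lemma T_transform_eq_iff:
  assumes "1 \<le> d"
  shows "T_transform m d p = T \<longleftrightarrow>
    size T = d \<and> (\<forall>i\<in>{1..d}. (\<Sum>t\<in>#T. t ^ i) = of_nat d * of_real (T_moment m d p i))"
    (is "_ \<longleftrightarrow> ?moments T")
proof -
  have "(1 / of_nat d) * x = y \<longleftrightarrow> x = of_nat d * y" for x y :: complex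
    using assms by (auto simp: field_simps)
  then have "T_transform m d p = (THE T. ?moments T)"
    unfolding T_transform_def T_moment_def by simp
  moreover have "\<exists>!T. ?moments T"
  proof (rule ex_ex1I)
    obtain T :: "complex multiset" where "size T = d"
      and "\<forall>i\<in>{1..d}. (\<Sum>t\<in>#T. t ^ i) = of_nat d * of_real (T_moment m d p i)"
      by (rule ex_multiset_power_sums[of d "\<lambda>i. of_nat d * of_real (T_moment m d p i)"])
    then show "\<exists>T. ?moments T"
      by blast
    show "T = T'" if "?moments T" and "?moments T'" for T T'
      using that by (intro multiset_eq_if_power_sums_eq[of T d T']) simp_all
  qed
  ultimately show ?thesis
    using the1_equality[of ?moments T] theI'[of ?moments] by auto
qed

lemma T_transform_eq_replicate_iff:
  assumes "1 \<le> d"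
  shows "T_transform m d p = replicate_mset d (of_real \<sigma>) \<longleftrightarrow> (\<forall>i\<in>{1..d}. T_moment m d p i = \<sigma> ^ i)"
proof -
  have "(\<Sum>t\<in>#replicate_mset d (of_real \<sigma>). t ^ i) = of_nat d * of_real (\<sigma> ^ i)" for i
    by simp
  moreover have "of_real \<sigma> ^ i = (of_real M :: complex) \<longleftrightarrow> M = \<sigma> ^ i" for M i
    by (metis of_real_eq_iff of_real_power)
  ultimately show ?thesis
    unfolding T_transform_eq_iff[OF assms] using assms by simp
qed

lemma T_moment_0: "degree p = d \<Longrightarrow> T_moment m d p 0 = lead_coeff p"
  by (simp add: T_moment_def pcoef_def)

lemma T_moment_smult: "T_moment m d (smult a p) i = a * T_moment m d p i"
  by (simp add: T_moment_def pcoef_def)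

lemma monic_poly_eq_iff_T_moments:
  assumes "degree p = d" and "degree q = d" and "lead_coeff p = 1" and "lead_coeff q = 1"
  shows "p = q \<longleftrightarrow> (\<forall>i\<in>{1..d}. T_moment m d p i = T_moment m d q i)"
proof
  assume moments: "\<forall>i\<in>{1..d}. T_moment m d p i = T_moment m d q i"
  have "coeff p j = coeff q j" for j
  proof (cases "j < d")
    case True
    with moments have "T_moment m d p (d - j) = T_moment m d q (d - j)"
      by auto
    with True show ?thesis
      by (simp add: T_moment_def pcoef_def)
  next
    case False
    with assms show ?thesis
      by (cases "j = d") (simp_all add: coeff_eq_0)
  qed
  then show "p = q"
    by (rule poly_eqI)
qed simp

section \<open>The R-transform\<close>

lemma E_fps_nth:
  "E_fps m d p $ n = (if n \<le> d then (- (real m * real d)) ^ n / fact n * T_moment m d p n else 0)"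
proof -
  have "a * b * c / e * q = a * (b * c / e * q)" for a b c e q :: real
    by simp
  then have "T_moment m d p n = fact n * (fact (m - n) * fact (d - n) / (fact m * fact d) * pcoef d p n)"
    unfolding T_moment_def .
  then show ?thesis
    unfolding E_fps_def fps_nth_Abs_fps power_minus[of "real m * real d"] by simp
qed

lemma fps_nth_eq_upto_mult_right_iff:
  fixes f g E :: "'a::idom fps"
  assumes "E $ 0 \<noteq> 0"
  shows "(\<forall>k\<le>d. (f * E) $ k = (g * E) $ k) \<longleftrightarrow> (\<forall>k\<le>d. f $ k = g $ k)"
proof
  assume fE_eq: "\<forall>k\<le>d. (f * E) $ k = (g * E) $ k"
  have "f $ k = g $ k" if "k \<le> d" for k
    using that
  proof (induction k rule: less_induct)
    case (less k)
    have split: "(h * E) $ k = h $ k * E $ 0 + (\<Sum>i<k. h $ i * E $ (k - i))" for h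
      by (simp add: fps_mult_nth atLeast0AtMost lessThan_Suc_atMost[symmetric])
    have "(\<Sum>i<k. f $ i * E $ (k - i)) = (\<Sum>i<k. g $ i * E $ (k - i))"
      by (rule sum.cong) (use less in auto)
    with fE_eq less.prems split[of f] split[of g] have "f $ k * E $ 0 = g $ k * E $ 0"
      by auto
    with assms show ?case
      by simp
  qed
  then show "\<forall>k\<le>d. f $ k = g $ k"
    by blast
qed (auto simp: fps_mult_nth intro!: sum.cong)

lemma fps_log_deriv_eq_upto_iff:
  fixes E :: "'a::field_char_0 fps"
  assumes "E $ 0 = 1"
  shows "(\<forall>k\<le>d. (fps_X * fps_deriv E * inverse E) $ k = (fps_const c * fps_X) $ k)
    \<longleftrightarrow> (\<forall>k\<le>d. E $ k = fps_exp c $ k)"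
proof -
  have exp_rec: "of_nat (Suc k) * fps_exp c $ Suc k = c * fps_exp c $ k" for k
    using fps_deriv_nth[of "fps_exp c" k] by (simp del: fps_exp_nth)
  have X_deriv_nth: "(fps_X * fps_deriv E) $ k = of_nat k * E $ k" for k
    by (cases k) simp_all
  have XE: "fps_X * fps_deriv E * inverse E * E = fps_X * fps_deriv E"
    using assms by (simp add: inverse_mult_eq_1 mult.assoc)
  have "(\<forall>k\<le>d. (fps_X * fps_deriv E * inverse E) $ k = (fps_const c * fps_X) $ k)
      \<longleftrightarrow> (\<forall>k\<le>d. (fps_X * fps_deriv E) $ k = (fps_const c * fps_X * E) $ k)"
    using fps_nth_eq_upto_mult_right_iff[of E d "fps_X * fps_deriv E * inverse E" "fps_const c * fps_X"] assms
    unfolding XE by simp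
  also have "\<dots> \<longleftrightarrow> (\<forall>k\<le>d. of_nat k * E $ k = (if k = 0 then 0 else c * E $ (k - 1)))"
    by (simp add: X_deriv_nth mult.assoc)
  also have "\<dots> \<longleftrightarrow> (\<forall>k\<le>d. E $ k = fps_exp c $ k)"
  proof
    assume rec: "\<forall>k\<le>d. of_nat k * E $ k = (if k = 0 then 0 else c * E $ (k - 1))"
    have "E $ k = fps_exp c $ k" if "k \<le> d" for k
      using that
    proof (induction k)
      case (Suc k)
      with rec exp_rec[of k] have "of_nat (Suc k) * E $ Suc k = of_nat (Suc k) * fps_exp c $ Suc k"
        by fastforce
      then show ?case
        by (simp del: fps_exp_nth of_nat_Suc)
    qed (simp add: assms)
    then show "\<forall>k\<le>d. E $ k = fps_exp c $ k"
      by blast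
  next
    assume "\<forall>k\<le>d. E $ k = fps_exp c $ k"
    then show "\<forall>k\<le>d. of_nat k * E $ k = (if k = 0 then 0 else c * E $ (k - 1))"
      using exp_rec by (auto simp: gr0_conv_Suc simp del: fps_exp_nth of_nat_Suc)
  qed
  finally show ?thesis .
qed

lemma Poly_map_upt_eq_iff:
  assumes "degree q \<le> d"
  shows "Poly (map f [0..<Suc d]) = q \<longleftrightarrow> (\<forall>k\<le>d. f k = coeff q k)"
proof -
  have "coeff (Poly (map f [0..<Suc d])) k = (if k \<le> d then f k else 0)" for k
    by (auto simp: nth_default_def nth_map nth_upt simp del: upt_Suc)
  with assms show ?thesis
    by (auto simp: poly_eq_iff coeff_eq_0)
qed

lemma R_transform_eq_linear_iff:
  assumes "1 \<le> d" and "d \<le> m" and "degree p = d" and "lead_coeff p = 1"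
  shows "R_transform m d p = [:0, real m * \<sigma>:] \<longleftrightarrow> (\<forall>i\<in>{1..d}. T_moment m d p i = \<sigma> ^ i)"
proof -
  define E where "E = E_fps m d p"
  define c where "c = - (real m * real d)"
  have "c \<noteq> 0"
    using assms by (simp add: c_def)
  have E0: "E $ 0 = 1"
    using assms by (simp add: E_def E_fps_nth T_moment_0)
  have linear_nth: "(fps_const x * fps_X) $ k = (if k = 1 then x else 0)" for x :: real and k
    by simp
  have coeff_linear: "coeff [:0, x:] k = (fps_const x * fps_X) $ k" for x :: real and k
    by (simp add: coeff_pCons split: nat.split)
  have "R_transform m d p = [:0, real m * \<sigma>:] \<longleftrightarrow>
      (\<forall>k\<le>d. (- (fps_const (1 / real d) * fps_X * fps_deriv E * inverse E)) $ k
        = (fps_const (real m * \<sigma>) * fps_X) $ k)"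
    unfolding R_transform_def Let_def E_def coeff_linear[symmetric] using assms
    by (intro Poly_map_upt_eq_iff) simp
  also have "\<dots> \<longleftrightarrow> (\<forall>k\<le>d. - (fps_X * fps_deriv E * inverse E) $ k / real d
      = (if k = 1 then real m * \<sigma> else 0))"
    unfolding linear_nth by (simp add: mult.assoc)
  also have "\<dots> \<longleftrightarrow> (\<forall>k\<le>d. (fps_X * fps_deriv E * inverse E) $ k = (fps_const (c * \<sigma>) * fps_X) $ k)"
    unfolding linear_nth using assms by (intro all_cong) (auto simp: c_def field_simps)
  also have "\<dots> \<longleftrightarrow> (\<forall>k\<le>d. E $ k = fps_exp (c * \<sigma>) $ k)"
    by (rule fps_log_deriv_eq_upto_iff[OF E0])
  also have "\<dots> \<longleftrightarrow> (\<forall>k\<le>d. T_moment m d p k = \<sigma> ^ k)"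
  proof -
    have "fps_exp (c * \<sigma>) $ k = c ^ k / fact k * \<sigma> ^ k" for k
      by (simp add: power_mult_distrib)
    with \<open>c \<noteq> 0\<close> show ?thesis
      by (simp add: E_def E_fps_nth c_def)
  qed
  also have "\<dots> \<longleftrightarrow> (\<forall>i\<in>{1..d}. T_moment m d p i = \<sigma> ^ i)"
  proof -
    have "T_moment m d p 0 = \<sigma> ^ 0"
      using T_moment_0[of p d m] assms by simp
    then show ?thesis
      by (auto simp: Suc_le_eq)
  qed
  finally show ?thesis .
qed

section \<open>Rescaled Laguerre polynomials\<close>

lemma coeff_laguerre:
  "coeff (laguerre d a) j = (if j \<le> d then real ((d + a) choose (d - j)) * (-1) ^ j / fact j else 0)"
proof -
  have "coeff (smult x (monom 1 i)) j = (if i = j then x else 0)" for x :: real and i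
    by (simp add: coeff_monom)
  then show ?thesis
    unfolding laguerre_def coeff_sum by (simp add: sum.delta)
qed

lemma coeff_laguerre_rescaled:
  "coeff (pcompose (laguerre d a) [:0, s:]) j
     = (if j \<le> d then s ^ j * real ((d + a) choose (d - j)) * (-1) ^ j / fact j else 0)"
  by (simp add: coeff_pcompose_linear coeff_laguerre)

lemma degree_laguerre_rescaled:
  assumes "s \<noteq> 0"
  shows "degree (pcompose (laguerre d a) [:0, s:]) = d"
  using assms by (intro antisym degree_le le_degree) (auto simp: coeff_laguerre_rescaled)

lemma T_moment_laguerre_rescaled:
  assumes "d \<le> m" and "i \<le> d" and "\<sigma> \<noteq> 0"
  shows "T_moment m d (pcompose (laguerre d (m - d)) [:0, 1 / \<sigma>:]) i
    = lead_coeff (pcompose (laguerre d (m - d)) [:0, 1 / \<sigma>:]) * \<sigma> ^ i"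
proof -
  obtain k where d: "d = i + k"
    using assms(2) le_Suc_ex by blast
  have "fact i * fact (m - i) * real (m choose i) = fact m"
    using binomial_fact_lemma[of i m] assms by (metis of_nat_fact of_nat_mult le_trans)
  moreover have "(1 / \<sigma>) ^ (i + k) * \<sigma> ^ i = (1 / \<sigma>) ^ k"
    using assms(3) by (simp add: power_add power_one_over)
  ultimately show ?thesis
    using assms by (simp add: T_moment_def pcoef_def degree_laguerre_rescaled coeff_laguerre_rescaled d
      power_add field_simps)
qed

lemma roots_eq_laguerre_iff_T_moments:
  assumes "d \<le> m" and "\<sigma> \<noteq> 0" and "degree p = d" and "lead_coeff p = 1"
  defines "L \<equiv> pcompose (laguerre d (m - d)) [:0, 1 / \<sigma>:]"
  shows "(\<forall>z. order z (map_poly complex_of_real p) = order z (map_poly complex_of_real L))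
    \<longleftrightarrow> (\<forall>i\<in>{1..d}. T_moment m d p i = \<sigma> ^ i)"
proof -
  have "degree L = d"
    using assms by (simp add: L_def degree_laguerre_rescaled)
  have "lead_coeff L \<noteq> 0"
    unfolding \<open>degree L = d\<close> using assms by (simp add: L_def coeff_laguerre_rescaled)
  then have "L \<noteq> 0"
    by auto
  have lead_L: "lead_coeff (map_poly complex_of_real L) = of_real (lead_coeff L)"
    by (rule lead_coeff_map_poly_nz) (simp_all add: \<open>L \<noteq> 0\<close>)
  then have "map_poly complex_of_real L \<noteq> 0"
    using \<open>lead_coeff L \<noteq> 0\<close> by auto
  have "(\<forall>z. order z (map_poly complex_of_real p) = order z (map_poly complex_of_real L))
      \<longleftrightarrow> map_poly complex_of_real p = map_poly of_real (smult (inverse (lead_coeff L)) L)"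
    by (subst order_eq_iff_smult_complex)
      (use assms(1-4) \<open>map_poly complex_of_real L \<noteq> 0\<close> in \<open>simp_all add: lead_coeff_map_poly_nz lead_L map_poly_smult\<close>)
  also have "\<dots> \<longleftrightarrow> p = smult (inverse (lead_coeff L)) L"
    by (rule map_poly_of_real_eq_iff)
  also have "\<dots> \<longleftrightarrow> (\<forall>i\<in>{1..d}. T_moment m d p i = T_moment m d (smult (inverse (lead_coeff L)) L) i)"
    using assms \<open>degree L = d\<close> \<open>lead_coeff L \<noteq> 0\<close> by (intro monic_poly_eq_iff_T_moments) simp_all
  also have "\<dots> \<longleftrightarrow> (\<forall>i\<in>{1..d}. T_moment m d p i = \<sigma> ^ i)"
    using T_moment_laguerre_rescaled[OF assms(1) _ assms(2)] \<open>lead_coeff L \<noteq> 0\<close>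
    by (simp add: T_moment_smult L_def flip: mult.assoc)
  finally show ?thesis .
qed

theorem mainTheorem9:
  fixes m d :: nat and p :: "real poly" and \<sigma>2 :: real
  assumes "1 \<le> d" and "d \<le> m"
    and "degree p = d" and "lead_coeff p = 1"
    and "\<forall>z::complex. poly (map_poly complex_of_real p) z = 0 \<longrightarrow> z \<in> \<real> \<and> 0 \<le> Re z"
    and "\<sigma>2 > 0"
  shows "(T_transform m d p = replicate_mset d (complex_of_real \<sigma>2)
          \<longleftrightarrow> R_transform m d p = [:0, real m * \<sigma>2:])
       \<and> (R_transform m d p = [:0, real m * \<sigma>2:]
          \<longleftrightarrow> (\<forall>z::complex. order z (map_poly complex_of_real p) =
                 order z (map_poly complex_of_real (pcompose (laguerre d (m - d)) [:0, 1 / \<sigma>2:]))))"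
proof -
  have "T_transform m d p = replicate_mset d (complex_of_real \<sigma>2)
      \<longleftrightarrow> (\<forall>i\<in>{1..d}. T_moment m d p i = \<sigma>2 ^ i)"
    by (rule T_transform_eq_replicate_iff[OF assms(1)])
  moreover have "R_transform m d p = [:0, real m * \<sigma>2:]
      \<longleftrightarrow> (\<forall>i\<in>{1..d}. T_moment m d p i = \<sigma>2 ^ i)"
    by (rule R_transform_eq_linear_iff[OF assms(1-4)])
  moreover have "(\<forall>z::complex. order z (map_poly complex_of_real p) =
        order z (map_poly complex_of_real (pcompose (laguerre d (m - d)) [:0, 1 / \<sigma>2:])))
      \<longleftrightarrow> (\<forall>i\<in>{1..d}. T_moment m d p i = \<sigma>2 ^ i)"
    using assms(6) by (intro roots_eq_laguerre_iff_T_moments[OF assms(2) _ assms(3,4)]) simp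
  ultimately show ?thesis
    by blast
qed

end
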